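(* Let $(B_a)_{a\in A}$ be a polynomial and $S:=\sum_{a\in A}\mathcal P(B_a)$. If $H((B_a)_{a\in A})$ is a set, then $H((B_a)_{a\in A})$ with the structure $s(a,f)=\{f(b)\mid b\in B_a\}$ is an initial algebra for the polynomial $(B_a)_{a\in A}$ together with the family of all image preserving equations with variable set $S$.
   Context: Work in $\mathbf{ZF}$. A polynomial is a set $A$ with a family of sets $(B_a)_{a\in A}$; an algebra is a set $X$ with $s:\sum_{a\in A}X^{B_a}\to X$; a homomorphism $(X,s)\to(Y,t)$ is $h:X\to Y$ with $h(s(a,f))=t(a,h\circ f)$. An image preserving equation is a tuple $(V,a,b,l,r)$ with $V$ a set, $a,b\in A$, $l:B_a\to V$, $r:B_b\to V$ having the same image; an algebra $(X,s)$ satisfies it if $s(a,h\circ l)=s(b,h\circ r)$ for all $h:V\to X$. The family of all image preserving equations with variable set $S$ is indexed by the set of all tuples $(a,b,l,r)$ with $l:B_a\to S$, $r:B_b\to S$ of equal image, each with $V=S$. A set $X$ is small relative to $(B_a)_{a\in A}$ if some $B_a$ surjects onto $X$; hereditarily small if it is small and all its elements are hereditarily small. $H((B_a)_{a\in A})$ is the class of hereditarily small sets. *)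

theory Defs
  imports "HOL-Library.FuncSet"
begin

text \<open>A model of ZF set theory inside HOL: the type 'v is the universe of sets,
  and elts x is the collection of elements of the set x.\<close>

definition zf_universe :: "('v \<Rightarrow> 'v set) \<Rightarrow> bool" where
  "zf_universe elts \<longleftrightarrow>
     inj elts
   \<and> wf {(x, y). x \<in> elts y}
   \<and> (\<forall>x (f :: 'v \<Rightarrow> 'v). \<exists>y. elts y = f ` elts x)
   \<and> (\<forall>x. \<exists>y. elts y = \<Union> (elts ` elts x))
   \<and> (\<forall>x. \<exists>y. elts y = {z. elts z \<subseteq> elts x})
   \<and> (\<exists>y. elts y = {})
   \<and> (\<exists>y. (\<exists>e\<in>elts y. elts e = {}) \<and> (\<forall>x\<in>elts y. \<exists>z\<in>elts y. elts z = insert x (elts x)))"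

definition small_rel :: "('v \<Rightarrow> 'v set) \<Rightarrow> 'v \<Rightarrow> ('v \<Rightarrow> 'v) \<Rightarrow> 'v \<Rightarrow> bool" where
  "small_rel elts A B x \<longleftrightarrow> (\<exists>a\<in>elts A. \<exists>f. f \<in> elts (B a) \<rightarrow> elts x \<and> f ` elts (B a) = elts x)"

inductive hsmall :: "('v \<Rightarrow> 'v set) \<Rightarrow> 'v \<Rightarrow> ('v \<Rightarrow> 'v) \<Rightarrow> 'v \<Rightarrow> bool"
  for elts A B where
  "small_rel elts A B x \<Longrightarrow> (\<And>y. y \<in> elts x \<Longrightarrow> hsmall elts A B y) \<Longrightarrow> hsmall elts A B x"

definition is_alg :: "('v \<Rightarrow> 'v set) \<Rightarrow> 'v \<Rightarrow> ('v \<Rightarrow> 'v) \<Rightarrow> 'v \<Rightarrow> ('v \<Rightarrow> ('v \<Rightarrow> 'v) \<Rightarrow> 'v) \<Rightarrow> bool" where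
  "is_alg elts A B X s \<longleftrightarrow> (\<forall>a\<in>elts A. \<forall>f\<in>elts (B a) \<rightarrow>\<^sub>E elts X. s a f \<in> elts X)"

definition is_hom :: "('v \<Rightarrow> 'v set) \<Rightarrow> 'v \<Rightarrow> ('v \<Rightarrow> 'v) \<Rightarrow> 'v \<Rightarrow> ('v \<Rightarrow> ('v \<Rightarrow> 'v) \<Rightarrow> 'v)
      \<Rightarrow> 'v \<Rightarrow> ('v \<Rightarrow> ('v \<Rightarrow> 'v) \<Rightarrow> 'v) \<Rightarrow> ('v \<Rightarrow> 'v) \<Rightarrow> bool" where
  "is_hom elts A B X s Y t h \<longleftrightarrow> h \<in> elts X \<rightarrow>\<^sub>E elts Y \<and>
     (\<forall>a\<in>elts A. \<forall>f\<in>elts (B a) \<rightarrow>\<^sub>E elts X. h (s a f) = t a (compose (elts (B a)) h f))"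

definition ip_equation :: "('v \<Rightarrow> 'v set) \<Rightarrow> 'v \<Rightarrow> ('v \<Rightarrow> 'v) \<Rightarrow> 'w set \<Rightarrow> 'v \<Rightarrow> 'v \<Rightarrow> ('v \<Rightarrow> 'w) \<Rightarrow> ('v \<Rightarrow> 'w) \<Rightarrow> bool" where
  "ip_equation elts A B V a b l r \<longleftrightarrow> a \<in> elts A \<and> b \<in> elts A \<and>
     l \<in> elts (B a) \<rightarrow>\<^sub>E V \<and> r \<in> elts (B b) \<rightarrow>\<^sub>E V \<and> l ` elts (B a) = r ` elts (B b)"

definition satisfies_eq :: "('v \<Rightarrow> 'v set) \<Rightarrow> ('v \<Rightarrow> 'v) \<Rightarrow> 'v \<Rightarrow> ('v \<Rightarrow> ('v \<Rightarrow> 'v) \<Rightarrow> 'v)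
      \<Rightarrow> 'w set \<Rightarrow> 'v \<Rightarrow> 'v \<Rightarrow> ('v \<Rightarrow> 'w) \<Rightarrow> ('v \<Rightarrow> 'w) \<Rightarrow> bool" where
  "satisfies_eq elts B X s V a b l r \<longleftrightarrow>
     (\<forall>h\<in>V \<rightarrow> elts X. s a (compose (elts (B a)) h l) = s b (compose (elts (B b)) h r))"

definition all_ip_equations :: "('v \<Rightarrow> 'v set) \<Rightarrow> 'v \<Rightarrow> ('v \<Rightarrow> 'v) \<Rightarrow> 'w set
      \<Rightarrow> ('v \<times> 'v \<times> ('v \<Rightarrow> 'w) \<times> ('v \<Rightarrow> 'w)) set" where
  "all_ip_equations elts A B V = {(a, b, l, r). ip_equation elts A B V a b l r}"

definition satisfies_all :: "('v \<Rightarrow> 'v set) \<Rightarrow> ('v \<Rightarrow> 'v) \<Rightarrow> 'v \<Rightarrow> ('v \<Rightarrow> ('v \<Rightarrow> 'v) \<Rightarrow> 'v)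
      \<Rightarrow> 'w set \<Rightarrow> ('v \<times> 'v \<times> ('v \<Rightarrow> 'w) \<times> ('v \<Rightarrow> 'w)) set \<Rightarrow> bool" where
  "satisfies_all elts B X s V E \<longleftrightarrow> (\<forall>(a, b, l, r)\<in>E. satisfies_eq elts B X s V a b l r)"

definition initial_alg :: "('v \<Rightarrow> 'v set) \<Rightarrow> 'v \<Rightarrow> ('v \<Rightarrow> 'v) \<Rightarrow> 'w set
      \<Rightarrow> ('v \<times> 'v \<times> ('v \<Rightarrow> 'w) \<times> ('v \<Rightarrow> 'w)) set \<Rightarrow> 'v \<Rightarrow> ('v \<Rightarrow> ('v \<Rightarrow> 'v) \<Rightarrow> 'v) \<Rightarrow> bool" where
  "initial_alg elts A B V E X s \<longleftrightarrow>
     is_alg elts A B X s \<and> satisfies_all elts B X s V E \<and>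
     (\<forall>Y t. is_alg elts A B Y t \<and> satisfies_all elts B Y t V E \<longrightarrow>
        (\<exists>!h. is_hom elts A B X s Y t h))"

definition img_struct :: "('v \<Rightarrow> 'v set) \<Rightarrow> ('v \<Rightarrow> 'v) \<Rightarrow> 'v \<Rightarrow> ('v \<Rightarrow> 'v) \<Rightarrow> 'v" where
  "img_struct elts B a f = (THE y. elts y = f ` elts (B a))"

end

theory Submission
  imports Defs
begin

text \<open>The structure s(a, f) = f[B_a] maps hereditarily small sets to hereditarily small
  sets, and every hereditarily small x is of the form s(a, f) for some f : B_a \<rightarrow> x.
  Hence a homomorphism h into an algebra (Y, t) must satisfy h(x) = t(a, h \<circ> f) for every
  such presentation of x; this determines h by \<in>-recursion, which gives uniqueness.
  For existence, define h by \<in>-recursion along one chosen presentation of each x. That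
  the value does not depend on the presentation is exactly what the image preserving
  equations with variables in S = \<Sum>a. P(B_a) express: two presentations of x are
  identified by tagging each argument with its fibre.\<close>

lemma zf_universe_inj: "zf_universe elts \<Longrightarrow> inj elts"
  unfolding zf_universe_def by (elim conjE)

lemma zf_universe_wf_mem: "zf_universe elts \<Longrightarrow> wf {(x, y). x \<in> elts y}"
  unfolding zf_universe_def by (elim conjE)

lemma zf_universe_replacement:
  fixes elts :: "'v \<Rightarrow> 'v set" and f :: "'v \<Rightarrow> 'v"
  assumes "zf_universe elts"
  shows "\<exists>y. elts y = f ` elts x"
  using assms unfolding zf_universe_def by blast

lemma image_compose: "compose A g f ` A = g ` f ` A"
  by (rule surj_compose) simp_all

lemma elts_img_struct:
  assumes "zf_universe elts"
  shows "elts (img_struct elts B a f) = f ` elts (B a)"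
proof -
  obtain y where y: "elts y = f ` elts (B a)"
    using zf_universe_replacement[OF assms] by blast
  have "(THE y. elts y = f ` elts (B a)) = y"
  proof (rule the_equality)
    fix z assume "elts z = f ` elts (B a)"
    with y show "z = y" using zf_universe_inj[OF assms] by (metis injD)
  qed (fact y)
  then show ?thesis
    using y unfolding img_struct_def by simp
qed

lemma img_struct_eqI:
  assumes "zf_universe elts" and "f ` elts (B a) = g ` elts (B b)"
  shows "img_struct elts B a f = img_struct elts B b g"
  using assms by (metis elts_img_struct zf_universe_inj injD)

lemma satisfies_all_img_struct:
  assumes "zf_universe elts"
  shows "satisfies_all elts B X (img_struct elts B) V (all_ip_equations elts A B V)"
  unfolding satisfies_all_def all_ip_equations_def satisfies_eq_def ip_equation_def
  by clarify (rule img_struct_eqI[OF assms], simp only: image_compose)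

lemma hsmall_small_rel: "hsmall elts A B x \<Longrightarrow> small_rel elts A B x"
  by (erule hsmall.cases) simp

lemma hsmall_elts: "hsmall elts A B x \<Longrightarrow> y \<in> elts x \<Longrightarrow> hsmall elts A B y"
  by (erule hsmall.cases) blast

lemma hsmall_img_struct:
  assumes "zf_universe elts" and "a \<in> elts A" and "f \<in> elts (B a) \<rightarrow> Collect (hsmall elts A B)"
  shows "hsmall elts A B (img_struct elts B a f)"
proof (rule hsmall.intros)
  show "small_rel elts A B (img_struct elts B a f)"
    unfolding small_rel_def elts_img_struct[OF assms(1)] using assms(2) by blast
qed (use assms in \<open>auto simp: elts_img_struct\<close>)

lemma hsmall_eq_img_struct:
  assumes "zf_universe elts" and "hsmall elts A B x"
  obtains a f where "a \<in> elts A" "f \<in> elts (B a) \<rightarrow>\<^sub>E elts x" "x = img_struct elts B a f"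
proof -
  obtain a f where a: "a \<in> elts A" and f: "f \<in> elts (B a) \<rightarrow> elts x" "f ` elts (B a) = elts x"
    using hsmall_small_rel[OF assms(2)] unfolding small_rel_def by blast
  have "elts (img_struct elts B a (restrict f (elts (B a)))) = elts x"
    using f(2) by (simp add: elts_img_struct[OF assms(1)])
  then have "x = img_struct elts B a (restrict f (elts (B a)))"
    using zf_universe_inj[OF assms(1)] by (metis injD)
  moreover have "restrict f (elts (B a)) \<in> elts (B a) \<rightarrow>\<^sub>E elts x"
    using f(1) by simp
  ultimately show thesis
    using that a by blast
qed

lemma is_hom_img_struct_unique:
  assumes zf: "zf_universe elts" and H: "elts H = Collect (hsmall elts A B)"
    and h1: "is_hom elts A B H (img_struct elts B) Y t h1"
    and h2: "is_hom elts A B H (img_struct elts B) Y t h2"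
  shows "h1 = h2"
proof
  fix x
  show "h1 x = h2 x"
  proof (cases "hsmall elts A B x")
    case False
    then show ?thesis
      using h1 h2 H unfolding is_hom_def by (auto simp: PiE_def extensional_def)
  next
    case True
    then show ?thesis
    proof (induction rule: hsmall.induct)
      case (1 x)
      then have "hsmall elts A B x"
        by (blast intro: hsmall.intros)
      then obtain a f where a: "a \<in> elts A" and f: "f \<in> elts (B a) \<rightarrow>\<^sub>E elts x"
        and x: "x = img_struct elts B a f"
        using hsmall_eq_img_struct[OF zf] by blast
      have fH: "f \<in> elts (B a) \<rightarrow>\<^sub>E elts H"
        using f 1(2) H by auto
      have "compose (elts (B a)) h1 f = compose (elts (B a)) h2 f"
        using f 1(3) by (auto intro!: restrict_ext simp: compose_def)
      then show ?case
        using h1 h2 a fH x unfolding is_hom_def by metis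
    qed
  qed
qed

lemma fibre_assignment:
  fixes f :: "'a \<Rightarrow> 'b" and a :: 'c
  assumes f: "f \<in> D \<rightarrow> X" "f ` D = X" and g: "g \<in> X \<rightarrow> Y" and y0: "y0 \<in> Y"
  obtains k where "\<And>p. k p \<in> Y" and "\<And>y. y \<in> X \<Longrightarrow> k (a, {\<gamma> \<in> D. f \<gamma> = y}) = g y"
proof
  define k where "k p = (if snd p \<noteq> {} \<and> snd p \<subseteq> D then g (f (SOME \<beta>. \<beta> \<in> snd p)) else y0)"
    for p :: "'c \<times> 'a set"
  show "k p \<in> Y" for p
  proof (cases "snd p \<noteq> {} \<and> snd p \<subseteq> D")
    case True
    then have "(SOME \<beta>. \<beta> \<in> snd p) \<in> D"
      by (metis some_in_eq subsetD)
    then have "f (SOME \<beta>. \<beta> \<in> snd p) \<in> X"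
      using f(1) by blast
    then show ?thesis
      using True g unfolding k_def by auto
  qed (auto simp: k_def y0)
  show "k (a, {\<gamma> \<in> D. f \<gamma> = y}) = g y" if "y \<in> X" for y
  proof -
    have ne: "{\<gamma> \<in> D. f \<gamma> = y} \<noteq> {}"
      using that f(2) by blast
    then have "(SOME \<beta>. \<beta> \<in> {\<gamma> \<in> D. f \<gamma> = y}) \<in> {\<gamma> \<in> D. f \<gamma> = y}"
      by (metis some_in_eq)
    then show ?thesis
      using ne unfolding k_def by auto
  qed
qed

lemma satisfies_ip_equations_image_invariant:
  fixes elts :: "'v \<Rightarrow> 'v set" and A :: 'v and B :: "'v \<Rightarrow> 'v"
  defines "S \<equiv> SIGMA a:elts A. Pow (elts (B a))"
  assumes alg: "is_alg elts A B Y t"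
    and sat: "satisfies_all elts B Y t S (all_ip_equations elts A B S)"
    and a: "a \<in> elts A" and b: "b \<in> elts A"
    and f: "f \<in> elts (B a) \<rightarrow> X" "f ` elts (B a) = X"
    and f': "f' \<in> elts (B b) \<rightarrow> X" "f' ` elts (B b) = X"
    and g: "g \<in> X \<rightarrow> elts Y"
  shows "t a (compose (elts (B a)) g f) = t b (compose (elts (B b)) g f')"
proof -
  obtain y0 where y0: "y0 \<in> elts Y"
  proof (cases "elts (B a) = {}")
    case True
    then have "(\<lambda>_. undefined) \<in> elts (B a) \<rightarrow>\<^sub>E elts Y"
      by simp
    then show thesis
      using that alg a unfolding is_alg_def by blast
  next
    case False
    then show thesis
      using that f(1) g by blast
  qed
  text \<open>Tag each argument with its f-fibre: l and r then have the same image, and an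
    assignment k reading g off the fibres turns the equation (a, b, l, r) into the claim.\<close>
  define fibre where "fibre y = {\<gamma> \<in> elts (B a). f \<gamma> = y}" for y
  obtain k where kY: "\<And>p. k p \<in> elts Y" and k_fibre: "\<And>y. y \<in> X \<Longrightarrow> k (a, fibre y) = g y"
    unfolding fibre_def by (fact fibre_assignment[OF f g y0, where a = a])
  define l where "l = (\<lambda>\<beta>\<in>elts (B a). (a, fibre (f \<beta>)))"
  define r where "r = (\<lambda>\<beta>\<in>elts (B b). (a, fibre (f' \<beta>)))"
  have "l ` elts (B a) = (\<lambda>y. (a, fibre y)) ` X"
    unfolding l_def using f(2) by auto
  moreover have "r ` elts (B b) = (\<lambda>y. (a, fibre y)) ` X"
    unfolding r_def using f'(2) by auto
  ultimately have "l ` elts (B a) = r ` elts (B b)"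
    by simp
  moreover have "l \<in> elts (B a) \<rightarrow>\<^sub>E S" "r \<in> elts (B b) \<rightarrow>\<^sub>E S"
    unfolding l_def r_def S_def fibre_def using a by auto
  ultimately have "(a, b, l, r) \<in> all_ip_equations elts A B S"
    using a b unfolding all_ip_equations_def ip_equation_def by auto
  then have "satisfies_eq elts B Y t S a b l r"
    using sat unfolding satisfies_all_def by blast
  moreover have "k \<in> S \<rightarrow> elts Y"
    using kY by blast
  ultimately have "t a (compose (elts (B a)) k l) = t b (compose (elts (B b)) k r)"
    unfolding satisfies_eq_def by blast
  moreover have "compose (elts (B a)) k l = compose (elts (B a)) g f"
    and "compose (elts (B b)) k r = compose (elts (B b)) g f'"
    using k_fibre f(1) f'(1) unfolding compose_def l_def r_def
    by (auto intro!: restrict_ext simp: Pi_iff)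
  ultimately show ?thesis
    by simp
qed

definition small_witness :: "('v \<Rightarrow> 'v set) \<Rightarrow> 'v \<Rightarrow> ('v \<Rightarrow> 'v) \<Rightarrow> 'v \<Rightarrow> 'v \<times> ('v \<Rightarrow> 'v)" where
  "small_witness elts A B x =
     (SOME (a, f). a \<in> elts A \<and> f \<in> elts (B a) \<rightarrow> elts x \<and> f ` elts (B a) = elts x)"

lemma small_witness:
  assumes "small_rel elts A B x" and "small_witness elts A B x = (a, f)"
  shows "a \<in> elts A" and "f \<in> elts (B a) \<rightarrow> elts x" and "f ` elts (B a) = elts x"
proof -
  have "\<exists>p. case p of (a, f) \<Rightarrow> a \<in> elts A \<and> f \<in> elts (B a) \<rightarrow> elts x \<and> f ` elts (B a) = elts x"
    using assms(1) unfolding small_rel_def by blast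
  from someI_ex[OF this] assms(2)
  have "a \<in> elts A \<and> f \<in> elts (B a) \<rightarrow> elts x \<and> f ` elts (B a) = elts x"
    unfolding small_witness_def by simp
  then show "a \<in> elts A" and "f \<in> elts (B a) \<rightarrow> elts x" and "f ` elts (B a) = elts x"
    by blast+
qed

definition hsmall_fold ::
  "('v \<Rightarrow> 'v set) \<Rightarrow> 'v \<Rightarrow> ('v \<Rightarrow> 'v) \<Rightarrow> ('v \<Rightarrow> ('v \<Rightarrow> 'v) \<Rightarrow> 'v) \<Rightarrow> 'v \<Rightarrow> 'v" where
  "hsmall_fold elts A B t = wfrec {(x, y). x \<in> elts y}
     (\<lambda>h x. if hsmall elts A B x
            then (case small_witness elts A B x of (a, f) \<Rightarrow> t a (compose (elts (B a)) h f))
            else undefined)"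

lemma hsmall_fold_eq:
  fixes elts :: "'v \<Rightarrow> 'v set"
  assumes "zf_universe elts"
  shows "hsmall_fold elts A B t x =
    (if hsmall elts A B x
     then (case small_witness elts A B x of (a, f) \<Rightarrow> t a (compose (elts (B a)) (hsmall_fold elts A B t) f))
     else undefined)"
proof -
  have "adm_wf {(x, y). x \<in> elts y}
     (\<lambda>h x. if hsmall elts A B x
            then (case small_witness elts A B x of (a, f) \<Rightarrow> t a (compose (elts (B a)) h f))
            else undefined)"
    (is "adm_wf ?R ?F")
    unfolding adm_wf_def
  proof (intro allI impI)
    fix h h' :: "'v \<Rightarrow> 'v" and x
    assume agree: "\<forall>z. (z, x) \<in> ?R \<longrightarrow> h z = h' z"
    show "?F h x = ?F h' x"
    proof (cases "hsmall elts A B x")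
      case True
      obtain a f where w: "small_witness elts A B x = (a, f)"
        by fastforce
      have "f \<in> elts (B a) \<rightarrow> elts x"
        by (rule small_witness(2)[OF hsmall_small_rel[OF True] w])
      then have "compose (elts (B a)) h f = compose (elts (B a)) h' f"
        using agree by (auto intro!: restrict_ext simp: compose_def)
      then show ?thesis
        using w by simp
    qed simp
  qed
  from wfrec_fixpoint[OF zf_universe_wf_mem[OF assms] this]
  show ?thesis
    unfolding hsmall_fold_def by (rule fun_cong)
qed

lemma hsmall_fold_in_carrier:
  assumes zf: "zf_universe elts" and alg: "is_alg elts A B Y t"
    and "hsmall elts A B x"
  shows "hsmall_fold elts A B t x \<in> elts Y"
  using assms(3)
proof (induction rule: hsmall.induct)
  case (1 x)
  obtain a f where w: "small_witness elts A B x = (a, f)"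
    by fastforce
  note a = small_witness(1)[OF 1(1) w] and f = small_witness(2)[OF 1(1) w]
  have "compose (elts (B a)) (hsmall_fold elts A B t) f \<in> elts (B a) \<rightarrow>\<^sub>E elts Y"
    using f 1(3) by (auto simp: compose_def)
  then have "t a (compose (elts (B a)) (hsmall_fold elts A B t) f) \<in> elts Y"
    using alg a unfolding is_alg_def by blast
  moreover have "hsmall elts A B x"
    using 1 by (blast intro: hsmall.intros)
  ultimately show ?case
    using w by (simp add: hsmall_fold_eq[OF zf])
qed

lemma is_hom_hsmall_fold:
  fixes elts :: "'v \<Rightarrow> 'v set" and A :: 'v and B :: "'v \<Rightarrow> 'v"
  defines "S \<equiv> SIGMA a:elts A. Pow (elts (B a))"
  assumes zf: "zf_universe elts" and H: "elts H = Collect (hsmall elts A B)"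
    and alg: "is_alg elts A B Y t"
    and sat: "satisfies_all elts B Y t S (all_ip_equations elts A B S)"
  shows "is_hom elts A B H (img_struct elts B) Y t (hsmall_fold elts A B t)"
  unfolding is_hom_def
proof (intro conjI ballI)
  show "hsmall_fold elts A B t \<in> elts H \<rightarrow>\<^sub>E elts Y"
    using H hsmall_fold_in_carrier[OF zf alg] hsmall_fold_eq[OF zf] by auto
next
  fix a f
  assume a: "a \<in> elts A" and f: "f \<in> elts (B a) \<rightarrow>\<^sub>E elts H"
  let ?x = "img_struct elts B a f"
  have x: "hsmall elts A B ?x"
    using hsmall_img_struct[OF zf a] f H by auto
  have elts_x: "elts ?x = f ` elts (B a)"
    by (rule elts_img_struct[OF zf])
  obtain b f' where w: "small_witness elts A B ?x = (b, f')"
    by fastforce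
  note b = small_witness(1)[OF hsmall_small_rel[OF x] w]
    and f' = small_witness(2,3)[OF hsmall_small_rel[OF x] w]
  have "hsmall_fold elts A B t ?x = t b (compose (elts (B b)) (hsmall_fold elts A B t) f')"
    using x w by (simp add: hsmall_fold_eq[OF zf])
  also have "\<dots> = t a (compose (elts (B a)) (hsmall_fold elts A B t) f)"
  proof (rule satisfies_ip_equations_image_invariant[OF alg sat[unfolded S_def] b a f'])
    show "f \<in> elts (B a) \<rightarrow> elts ?x" and "f ` elts (B a) = elts ?x"
      using elts_x by auto
    show "hsmall_fold elts A B t \<in> elts ?x \<rightarrow> elts Y"
      using hsmall_fold_in_carrier[OF zf alg] hsmall_elts[OF x] by blast
  qed
  finally show "hsmall_fold elts A B t ?x = t a (compose (elts (B a)) (hsmall_fold elts A B t) f)" .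
qed

theorem mainTheorem4:
  fixes elts :: "'v \<Rightarrow> 'v set" and A :: 'v and B :: "'v \<Rightarrow> 'v" and H :: 'v
  assumes "zf_universe elts"
    and "elts H = {x. hsmall elts A B x}"
  shows "initial_alg elts A B (SIGMA a:elts A. Pow (elts (B a)))
           (all_ip_equations elts A B (SIGMA a:elts A. Pow (elts (B a))))
           H (img_struct elts B)"
proof -
  note zf = assms(1) and H = assms(2)
  have "is_alg elts A B H (img_struct elts B)"
    unfolding is_alg_def using hsmall_img_struct[OF zf] H by (auto simp: PiE_def)
  moreover have "\<exists>!h. is_hom elts A B H (img_struct elts B) Y t h"
    if "is_alg elts A B Y t"
      and "satisfies_all elts B Y t (SIGMA a:elts A. Pow (elts (B a)))
             (all_ip_equations elts A B (SIGMA a:elts A. Pow (elts (B a))))"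
    for Y t
    using is_hom_hsmall_fold[OF zf H that] is_hom_img_struct_unique[OF zf H] by blast
  ultimately show ?thesis
    unfolding initial_alg_def using satisfies_all_img_struct[OF zf] by blast
qed

end
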